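(* For every integer $k\ge 2$, the complete graph $K_{2k}$ has a quasi-majority neighbor sum distinguishing $3$-edge-coloring in which at least $k-1$ vertices are each incident to at most $k-1$ edges of color $2$.
   Context: A $3$-edge-coloring of $G$ is any map $c:E(G)\to\{1,2,3\}$ (adjacent edges may share colors). It induces $\sigma_c(v)=\sum_{u\in N(v)}c(vu)$. The coloring is neighbor sum distinguishing if $\sigma_c(u)\ne\sigma_c(v)$ for every edge $uv$, and quasi-majority if every vertex $v$ is incident to at most $\lceil d(v)/2\rceil$ edges of each single color. *)

theory Defs
  imports Main
begin

text \<open>Simple graphs are given by an edge set E of 2-element vertex sets.
  An edge colouring is a map c from edges to colours (natural numbers).\<close>

definition nbrs :: "'a set set \<Rightarrow> 'a \<Rightarrow> 'a set" where
  "nbrs E v = {u. {v, u} \<in> E}"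

definition deg :: "'a set set \<Rightarrow> 'a \<Rightarrow> nat" where
  "deg E v = card (nbrs E v)"

definition is_3_edge_coloring :: "'a set set \<Rightarrow> ('a set \<Rightarrow> nat) \<Rightarrow> bool" where
  "is_3_edge_coloring E c \<longleftrightarrow> (\<forall>e\<in>E. c e \<in> {1, 2, 3})"

definition sigma_c :: "'a set set \<Rightarrow> ('a set \<Rightarrow> nat) \<Rightarrow> 'a \<Rightarrow> nat" where
  "sigma_c E c v = (\<Sum>u\<in>nbrs E v. c {v, u})"

definition nsd :: "'a set set \<Rightarrow> ('a set \<Rightarrow> nat) \<Rightarrow> bool" where
  "nsd E c \<longleftrightarrow> (\<forall>u v. {u, v} \<in> E \<longrightarrow> sigma_c E c u \<noteq> sigma_c E c v)"

definition color_deg :: "'a set set \<Rightarrow> ('a set \<Rightarrow> nat) \<Rightarrow> 'a \<Rightarrow> nat \<Rightarrow> nat" where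
  "color_deg E c v i = card {u \<in> nbrs E v. c {v, u} = i}"

text \<open>quasi-majority: at most ceil(d(v)/2) = (d(v)+1) div 2 edges of each colour at v.\<close>
definition quasi_majority :: "'a set \<Rightarrow> 'a set set \<Rightarrow> ('a set \<Rightarrow> nat) \<Rightarrow> bool" where
  "quasi_majority V E c \<longleftrightarrow> (\<forall>v\<in>V. \<forall>i. color_deg E c v i \<le> (deg E v + 1) div 2)"

definition K_edges :: "nat \<Rightarrow> nat set set" where
  "K_edges n = {{u, v} | u v. u < n \<and> v < n \<and> u \<noteq> v}"

end

theory Submission
  imports Defs
begin

text \<open>Induction on k, carrying the extra invariant that all colour sums of K_2k
  lie in the window [3k - 2, 5k - 2]. To pass from K_2k to K_2k+2 add the vertices
  x = 2k and y = 2k + 1 joined by colour 2; pick k - 1 vertices T of the set S of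
  small colour-2 degree and join them to both x and y by colour 2, and join every
  other old vertex to x by colour 3 and to y by colour 1. Every old sum grows by
  exactly 4, so old neighbours stay distinguished and now lie in [3k + 2, 5k + 2],
  while x and y get the sums 5k + 3 and 3k + 1, the endpoints of the next window.
  Quasi-majority survives because each old vertex gains at most one edge per
  colour, except the vertices of T, which gain two edges of colour 2 but had at
  most k - 1 of them. The k + 1 old vertices outside T have colour-2 degree at
  most k by quasi-majority, so they form the next S.\<close>

lemma K_edges_iff: "{u, v} \<in> K_edges n \<longleftrightarrow> u < n \<and> v < n \<and> u \<noteq> v"
  unfolding K_edges_def by (auto simp: doubleton_eq_iff)

lemma nbrs_K_edges: "nbrs (K_edges n) v = (if v < n then {..<n} - {v} else {})"
  unfolding nbrs_def by (auto simp: K_edges_iff)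

lemma deg_K_edges: "v < n \<Longrightarrow> deg (K_edges n) v = n - 1"
  unfolding deg_def nbrs_K_edges by simp

lemma sigma_c_K_edges:
  "v < n \<Longrightarrow> sigma_c (K_edges n) c v = (\<Sum>u\<in>{..<n} - {v}. c {v, u})"
  unfolding sigma_c_def nbrs_K_edges by simp

lemma color_deg_K_edges:
  "v < n \<Longrightarrow> color_deg (K_edges n) c v i = (\<Sum>u\<in>{..<n} - {v}. if c {v, u} = i then 1 else 0)"
  unfolding color_deg_def nbrs_K_edges by (subst card_eq_sum, subst sum.inter_filter) auto

lemma is_3_edge_coloring_K_edges_iff:
  "is_3_edge_coloring (K_edges n) c \<longleftrightarrow>
     (\<forall>u v. u < n \<and> v < n \<and> u \<noteq> v \<longrightarrow> c {u, v} \<in> {1, 2, 3})"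
  unfolding is_3_edge_coloring_def K_edges_def by auto

lemma nsd_K_edges_iff:
  "nsd (K_edges n) c \<longleftrightarrow>
     (\<forall>u v. u < n \<and> v < n \<and> u \<noteq> v \<longrightarrow> sigma_c (K_edges n) c u \<noteq> sigma_c (K_edges n) c v)"
  unfolding nsd_def K_edges_iff by auto

lemma quasi_majority_K_edges_iff:
  "quasi_majority {..<n} (K_edges n) c \<longleftrightarrow> (\<forall>v<n. \<forall>i. color_deg (K_edges n) c v i \<le> n div 2)"
  unfolding quasi_majority_def by (auto simp: deg_K_edges)

lemma sum_if_mem_subset:
  assumes "finite A" "T \<subseteq> A"
  shows "(\<Sum>u\<in>A. if u \<in> T then a else b) = a * card T + b * (card A - card T)"
proof -
  have "(\<Sum>u\<in>A. if u \<in> T then a else b) = a * card (A \<inter> T) + b * card (A - T)"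
    using assms(1) by (simp add: sum.If_cases Int_def set_diff_eq)
  then show ?thesis
    using assms by (simp add: Int_absorb1 card_Diff_subset finite_subset)
qed

definition extend_coloring :: "nat \<Rightarrow> nat set \<Rightarrow> (nat set \<Rightarrow> nat) \<Rightarrow> nat set \<Rightarrow> nat" where
  "extend_coloring n T c e =
     (if e \<subseteq> {..<n} then c e
      else if e = {n, Suc n} \<or> e \<inter> T \<noteq> {} then 2
      else if n \<in> e then 3 else 1)"

lemma extend_coloring_old:
  "u < n \<Longrightarrow> v < n \<Longrightarrow> extend_coloring n T c {u, v} = c {u, v}"
  by (simp add: extend_coloring_def)

lemma extend_coloring_new_new: "extend_coloring n T c {n, Suc n} = 2"
  by (simp add: extend_coloring_def)

lemma extend_coloring_first_new:
  "T \<subseteq> {..<n} \<Longrightarrow> v < n \<Longrightarrow> extend_coloring n T c {n, v} = (if v \<in> T then 2 else 3)"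
  by (auto simp: extend_coloring_def)

lemma extend_coloring_second_new:
  "T \<subseteq> {..<n} \<Longrightarrow> v < n \<Longrightarrow> extend_coloring n T c {Suc n, v} = (if v \<in> T then 2 else 1)"
  by (auto simp: extend_coloring_def)

text \<open>The weight g is arbitrary so that the same computation yields colour sums
  (g = id) and colour degrees (g the indicator of one colour).\<close>

lemma sum_extend_coloring_old:
  assumes "T \<subseteq> {..<n}" "v < n"
  shows "(\<Sum>u\<in>{..<Suc (Suc n)} - {v}. g (extend_coloring n T c {v, u})) =
    (\<Sum>u\<in>{..<n} - {v}. g (c {v, u})) + g (if v \<in> T then 2 else 3) + g (if v \<in> T then 2 else 1)"
proof -
  have "{..<Suc (Suc n)} - {v} = insert n (insert (Suc n) ({..<n} - {v}))"
    using assms(2) by auto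
  moreover have "(\<Sum>u\<in>{..<n} - {v}. g (extend_coloring n T c {v, u})) = (\<Sum>u\<in>{..<n} - {v}. g (c {v, u}))"
    using assms(2) by (intro sum.cong) (auto simp: extend_coloring_old)
  moreover have "extend_coloring n T c {v, n} = (if v \<in> T then 2 else 3)"
    using extend_coloring_first_new[OF assms] by (simp add: insert_commute)
  moreover have "extend_coloring n T c {v, Suc n} = (if v \<in> T then 2 else 1)"
    using extend_coloring_second_new[OF assms] by (simp add: insert_commute)
  ultimately show ?thesis
    by (simp add: ac_simps)
qed

lemma sum_extend_coloring_first_new:
  assumes "T \<subseteq> {..<n}"
  shows "(\<Sum>u\<in>{..<Suc (Suc n)} - {n}. g (extend_coloring n T c {n, u})) =
    g 2 * Suc (card T) + g 3 * (n - card T)"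
proof -
  have "{..<Suc (Suc n)} - {n} = insert (Suc n) {..<n}"
    by auto
  then have "(\<Sum>u\<in>{..<Suc (Suc n)} - {n}. g (extend_coloring n T c {n, u})) =
      g 2 + (\<Sum>u<n. g (extend_coloring n T c {n, u}))"
    by (simp add: extend_coloring_new_new)
  also have "(\<Sum>u<n. g (extend_coloring n T c {n, u})) = (\<Sum>u<n. if u \<in> T then g 2 else g 3)"
    using assms by (intro sum.cong) (auto simp: extend_coloring_first_new)
  also have "\<dots> = g 2 * card T + g 3 * (n - card T)"
    using assms by (simp add: sum_if_mem_subset)
  finally show ?thesis
    by simp
qed

lemma sum_extend_coloring_second_new:
  assumes "T \<subseteq> {..<n}"
  shows "(\<Sum>u\<in>{..<Suc (Suc n)} - {Suc n}. g (extend_coloring n T c {Suc n, u})) =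
    g 2 * Suc (card T) + g 1 * (n - card T)"
proof -
  have "{..<Suc (Suc n)} - {Suc n} = insert n {..<n}"
    by auto
  moreover have "extend_coloring n T c {Suc n, n} = 2"
    using extend_coloring_new_new by (simp add: insert_commute)
  ultimately have "(\<Sum>u\<in>{..<Suc (Suc n)} - {Suc n}. g (extend_coloring n T c {Suc n, u})) =
      g 2 + (\<Sum>u<n. g (extend_coloring n T c {Suc n, u}))"
    by simp
  also have "(\<Sum>u<n. g (extend_coloring n T c {Suc n, u})) = (\<Sum>u<n. if u \<in> T then g 2 else g 1)"
    using assms by (intro sum.cong) (auto simp: extend_coloring_second_new)
  also have "\<dots> = g 2 * card T + g 1 * (n - card T)"
    using assms by (simp add: sum_if_mem_subset)
  finally show ?thesis
    by simp
qed

lemma sigma_c_extend_coloring_old: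
  assumes "T \<subseteq> {..<n}" "v < n"
  shows "sigma_c (K_edges (Suc (Suc n))) (extend_coloring n T c) v = sigma_c (K_edges n) c v + 4"
  using assms sum_extend_coloring_old[OF assms, where g = "\<lambda>x. x" and c = c]
  by (auto simp: sigma_c_K_edges)

lemma sigma_c_extend_coloring_first_new:
  assumes "T \<subseteq> {..<n}"
  shows "sigma_c (K_edges (Suc (Suc n))) (extend_coloring n T c) n = 2 * Suc (card T) + 3 * (n - card T)"
  using sum_extend_coloring_first_new[OF assms, where g = "\<lambda>x. x" and c = c]
  by (simp add: sigma_c_K_edges)

lemma sigma_c_extend_coloring_second_new:
  assumes "T \<subseteq> {..<n}"
  shows "sigma_c (K_edges (Suc (Suc n))) (extend_coloring n T c) (Suc n) = 2 * Suc (card T) + (n - card T)"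
  using sum_extend_coloring_second_new[OF assms, where g = "\<lambda>x. x" and c = c]
  by (simp add: sigma_c_K_edges)

lemma color_deg_extend_coloring_old:
  assumes "T \<subseteq> {..<n}" "v < n"
  shows "color_deg (K_edges (Suc (Suc n))) (extend_coloring n T c) v i =
    color_deg (K_edges n) c v i
    + (if v \<in> T then (if i = 2 then 2 else 0) else (if i = 1 \<or> i = 3 then 1 else 0))"
  using assms sum_extend_coloring_old[OF assms, where g = "\<lambda>x. if x = i then 1 else 0" and c = c]
  by (auto simp: color_deg_K_edges)

lemma color_deg_extend_coloring_first_new:
  assumes "T \<subseteq> {..<n}"
  shows "color_deg (K_edges (Suc (Suc n))) (extend_coloring n T c) n i =
    (if i = 2 then Suc (card T) else 0) + (if i = 3 then n - card T else 0)"
  using sum_extend_coloring_first_new[OF assms, where g = "\<lambda>x. if x = i then 1 else 0" and c = c]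
  by (auto simp: color_deg_K_edges)

lemma color_deg_extend_coloring_second_new:
  assumes "T \<subseteq> {..<n}"
  shows "color_deg (K_edges (Suc (Suc n))) (extend_coloring n T c) (Suc n) i =
    (if i = 2 then Suc (card T) else 0) + (if i = 1 then n - card T else 0)"
  using sum_extend_coloring_second_new[OF assms, where g = "\<lambda>x. if x = i then 1 else 0" and c = c]
  by (auto simp: color_deg_K_edges)

lemma is_3_edge_coloring_extend_coloring:
  assumes "is_3_edge_coloring (K_edges n) c"
  shows "is_3_edge_coloring (K_edges (Suc (Suc n))) (extend_coloring n T c)"
  unfolding is_3_edge_coloring_K_edges_iff
proof (intro allI impI)
  fix u v
  assume uv: "u < Suc (Suc n) \<and> v < Suc (Suc n) \<and> u \<noteq> v"
  show "extend_coloring n T c {u, v} \<in> {1, 2, 3}"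
  proof (cases "u < n \<and> v < n")
    case True
    then show ?thesis
      using assms uv by (simp add: is_3_edge_coloring_K_edges_iff extend_coloring_old)
  qed (auto simp: extend_coloring_def)
qed

lemma quasi_majority_extend_coloring:
  assumes qm: "quasi_majority {..<2*k} (K_edges (2*k)) c"
    and T: "T \<subseteq> {..<2*k}" "card T = k - 1"
    and few_2: "\<forall>v\<in>T. color_deg (K_edges (2*k)) c v 2 \<le> k - 1"
  shows "quasi_majority {..<Suc (Suc (2*k))} (K_edges (Suc (Suc (2*k)))) (extend_coloring (2*k) T c)"
  unfolding quasi_majority_K_edges_iff
proof (intro allI impI)
  fix v i
  assume "v < Suc (Suc (2*k))"
  then consider "v < 2*k" | "v = 2*k" | "v = Suc (2*k)"
    by linarith
  then show "color_deg (K_edges (Suc (Suc (2*k)))) (extend_coloring (2*k) T c) v i \<le> Suc (Suc (2*k)) div 2"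
  proof cases
    case 1
    then have "color_deg (K_edges (2*k)) c v i \<le> k"
      using qm by (simp add: quasi_majority_K_edges_iff)
    then show ?thesis
      using 1 T few_2 by (auto simp: color_deg_extend_coloring_old)
  qed (use T in \<open>auto simp: color_deg_extend_coloring_first_new color_deg_extend_coloring_second_new\<close>)
qed

lemma sigma_c_extend_coloring_window:
  assumes window: "\<forall>v<2*k. 3*k - 2 \<le> sigma_c (K_edges (2*k)) c v \<and> sigma_c (K_edges (2*k)) c v \<le> 5*k - 2"
    and T: "T \<subseteq> {..<2*k}" "card T = k - 1"
    and k: "k \<ge> 1"
  shows "v < 2*k \<Longrightarrow>
      sigma_c (K_edges (Suc (Suc (2*k)))) (extend_coloring (2*k) T c) v \<in> {3*k + 2 .. 5*k + 2}"
    and "sigma_c (K_edges (Suc (Suc (2*k)))) (extend_coloring (2*k) T c) (2*k) = 5*k + 3"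
    and "sigma_c (K_edges (Suc (Suc (2*k)))) (extend_coloring (2*k) T c) (Suc (2*k)) = 3*k + 1"
proof -
  have card_T: "Suc (card T) = k" and card_rest: "2*k - card T = Suc k"
    using T k by simp_all
  show "v < 2*k \<Longrightarrow>
      sigma_c (K_edges (Suc (Suc (2*k)))) (extend_coloring (2*k) T c) v \<in> {3*k + 2 .. 5*k + 2}"
    using window k by (auto simp: sigma_c_extend_coloring_old[OF T(1)])
  show "sigma_c (K_edges (Suc (Suc (2*k)))) (extend_coloring (2*k) T c) (2*k) = 5*k + 3"
    by (simp add: sigma_c_extend_coloring_first_new[OF T(1)] card_T card_rest)
  show "sigma_c (K_edges (Suc (Suc (2*k)))) (extend_coloring (2*k) T c) (Suc (2*k)) = 3*k + 1"
    by (simp add: sigma_c_extend_coloring_second_new[OF T(1)] card_T card_rest)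
qed

lemma nsd_extend_coloring:
  assumes nsd: "nsd (K_edges (2*k)) c"
    and window: "\<forall>v<2*k. 3*k - 2 \<le> sigma_c (K_edges (2*k)) c v \<and> sigma_c (K_edges (2*k)) c v \<le> 5*k - 2"
    and T: "T \<subseteq> {..<2*k}" "card T = k - 1"
    and k: "k \<ge> 1"
  shows "nsd (K_edges (Suc (Suc (2*k)))) (extend_coloring (2*k) T c)"
  unfolding nsd_K_edges_iff
proof (intro allI impI)
  fix u v
  assume uv: "u < Suc (Suc (2*k)) \<and> v < Suc (Suc (2*k)) \<and> u \<noteq> v"
  note sums = sigma_c_extend_coloring_window[OF window T k]
  show "sigma_c (K_edges (Suc (Suc (2*k)))) (extend_coloring (2*k) T c) u \<noteq>
    sigma_c (K_edges (Suc (Suc (2*k)))) (extend_coloring (2*k) T c) v"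
  proof (cases "u < 2*k \<and> v < 2*k")
    case True
    then show ?thesis
      using nsd uv T(1) by (simp add: nsd_K_edges_iff sigma_c_extend_coloring_old)
  next
    case False
    then show ?thesis
      using uv sums(1)[of u] sums(1)[of v] sums(2,3) by (auto simp: less_Suc_eq)
  qed
qed

definition K4_coloring :: "nat set \<Rightarrow> nat" where
  "K4_coloring e = (if \<Sum>e \<le> 2 then 1 else if \<Sum>e \<le> 4 then 2 else 3)"

lemma lessThan_4: "{..<4::nat} = {0, 1, 2, 3}"
  by auto

lemma sigma_c_K4_coloring:
  assumes "v < 4"
  shows "sigma_c (K_edges 4) K4_coloring v = v + 4"
proof -
  from assms have "v = 0 \<or> v = 1 \<or> v = 2 \<or> v = 3"
    by auto
  then show ?thesis
    by (elim disjE) (simp_all add: sigma_c_K_edges lessThan_4 K4_coloring_def insert_Diff_if)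
qed

lemma color_deg_K4_coloring:
  assumes "v < 4"
  shows "color_deg (K_edges 4) K4_coloring v i \<le> 2"
proof -
  from assms have "v = 0 \<or> v = 1 \<or> v = 2 \<or> v = 3"
    by auto
  then show ?thesis
    by (elim disjE) (simp_all add: color_deg_K_edges lessThan_4 K4_coloring_def insert_Diff_if)
qed

definition admissible_coloring :: "nat \<Rightarrow> (nat set \<Rightarrow> nat) \<Rightarrow> nat set \<Rightarrow> bool" where
  "admissible_coloring k c S \<longleftrightarrow>
     is_3_edge_coloring (K_edges (2*k)) c
     \<and> quasi_majority {..<2*k} (K_edges (2*k)) c
     \<and> nsd (K_edges (2*k)) c
     \<and> S \<subseteq> {..<2*k} \<and> card S \<ge> k - 1
     \<and> (\<forall>v\<in>S. color_deg (K_edges (2*k)) c v 2 \<le> k - 1)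
     \<and> (\<forall>v<2*k. 3*k - 2 \<le> sigma_c (K_edges (2*k)) c v \<and> sigma_c (K_edges (2*k)) c v \<le> 5*k - 2)"

lemma admissible_K4_coloring: "admissible_coloring 2 K4_coloring {0}"
  unfolding admissible_coloring_def
proof (intro conjI)
  show "is_3_edge_coloring (K_edges (2 * 2)) K4_coloring"
    unfolding is_3_edge_coloring_def K4_coloring_def by auto
  show "quasi_majority {..<2 * 2} (K_edges (2 * 2)) K4_coloring"
    unfolding quasi_majority_K_edges_iff using color_deg_K4_coloring by simp
  show "nsd (K_edges (2 * 2)) K4_coloring"
    unfolding nsd_K_edges_iff using sigma_c_K4_coloring by simp
  show "\<forall>v\<in>{0}. color_deg (K_edges (2 * 2)) K4_coloring v 2 \<le> 2 - 1"
    by (simp add: color_deg_K_edges lessThan_4 K4_coloring_def insert_Diff_if)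
qed (use sigma_c_K4_coloring in auto)

lemma admissible_coloring_extend_coloring:
  assumes k: "k \<ge> 1"
    and adm: "admissible_coloring k c S"
    and T: "T \<subseteq> S" "card T = k - 1"
  shows "admissible_coloring (Suc k) (extend_coloring (2*k) T c) ({..<2*k} - T)"
proof -
  from adm have is3: "is_3_edge_coloring (K_edges (2*k)) c"
    and qm: "quasi_majority {..<2*k} (K_edges (2*k)) c"
    and nsd: "nsd (K_edges (2*k)) c"
    and S: "S \<subseteq> {..<2*k}" "\<forall>v\<in>S. color_deg (K_edges (2*k)) c v 2 \<le> k - 1"
    and window: "\<forall>v<2*k. 3*k - 2 \<le> sigma_c (K_edges (2*k)) c v \<and> sigma_c (K_edges (2*k)) c v \<le> 5*k - 2"
    unfolding admissible_coloring_def by auto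
  have T_old: "T \<subseteq> {..<2*k}"
    using S T by auto
  note sums = sigma_c_extend_coloring_window[OF window T_old T(2) k]
  have "3 * Suc k - 2 \<le> sigma_c (K_edges (Suc (Suc (2*k)))) (extend_coloring (2*k) T c) v
      \<and> sigma_c (K_edges (Suc (Suc (2*k)))) (extend_coloring (2*k) T c) v \<le> 5 * Suc k - 2"
    if "v < Suc (Suc (2*k))" for v
    using that sums(1)[of v] sums(2,3) by (auto simp: less_Suc_eq)
  moreover have "color_deg (K_edges (Suc (Suc (2*k)))) (extend_coloring (2*k) T c) v 2 \<le> k"
    if "v \<in> {..<2*k} - T" for v
    using that qm T_old by (auto simp: color_deg_extend_coloring_old quasi_majority_K_edges_iff)
  moreover have "card ({..<2*k} - T) = Suc k"
    using T_old T(2) k by (simp add: card_Diff_subset finite_subset)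
  moreover have "quasi_majority {..<Suc (Suc (2*k))} (K_edges (Suc (Suc (2*k)))) (extend_coloring (2*k) T c)"
    using quasi_majority_extend_coloring[OF qm T_old T(2)] S T by auto
  ultimately show ?thesis
    using is_3_edge_coloring_extend_coloring[OF is3] nsd_extend_coloring[OF nsd window T_old T(2) k]
    unfolding admissible_coloring_def by auto
qed

lemma admissible_coloring_exists: "k \<ge> 2 \<Longrightarrow> \<exists>c S. admissible_coloring k c S"
proof (induction k rule: dec_induct)
  case base
  show ?case
    using admissible_K4_coloring by blast
next
  case (step k)
  then obtain c S where adm: "admissible_coloring k c S"
    by blast
  then have "card S \<ge> k - 1"
    by (simp add: admissible_coloring_def)
  then obtain T where "T \<subseteq> S" "card T = k - 1"
    by (meson obtain_subset_with_card_n)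
  with step.hyps adm have "admissible_coloring (Suc k) (extend_coloring (2*k) T c) ({..<2*k} - T)"
    by (intro admissible_coloring_extend_coloring) auto
  then show ?case
    by blast
qed

theorem mainTheorem19:
  fixes k :: nat
  assumes "k \<ge> 2"
  shows "\<exists>c. is_3_edge_coloring (K_edges (2*k)) c
            \<and> quasi_majority {..<2*k} (K_edges (2*k)) c
            \<and> nsd (K_edges (2*k)) c
            \<and> (\<exists>S \<subseteq> {..<2*k}. card S \<ge> k - 1 \<and>
                 (\<forall>v\<in>S. color_deg (K_edges (2*k)) c v 2 \<le> k - 1))"
proof -
  obtain c S where "admissible_coloring k c S"
    using admissible_coloring_exists[OF assms] by blast
  then show ?thesis
    unfolding admissible_coloring_def by blast
qed

end
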